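(* Let $c<d$ be real numbers and $\Lambda$ a closed interval of $\mathbb{R}$. Let $f\colon[c,d]\times\Lambda\to(0,\infty)$ be jointly continuous with $\partial f/\partial\lambda$ jointly continuous, and assume $\frac{\partial f}{\partial\lambda}(x,\lambda)=f(x,\lambda)g(x,\lambda)$ where, for each $\lambda\in\Lambda$, $g(\cdot,\lambda)$ is strictly increasing (respectively strictly decreasing) in $x$. Then $$h(x,\lambda)=\frac{\int_x^d f(y,\lambda)\,dy}{\int_c^x f(y,\lambda)\,dy}$$ is a strictly increasing (respectively strictly decreasing) function of $\lambda\in\Lambda$ for every $x\in(c,d)$. *)

theory Defs
  imports "HOL-Analysis.Analysis"
begin

end

theory Submission
  imports Defs
begin

text \<open>Write \<open>F(\<lambda>) = \<integral>\<^sub>c\<^sup>x f\<close> and \<open>G(\<lambda>) = \<integral>\<^sub>x\<^sup>d f\<close>, so that \<open>h = G / F\<close>. Differentiating under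
  the integral sign gives \<open>F' = \<integral>\<^sub>c\<^sup>x f g\<close> and \<open>G' = \<integral>\<^sub>x\<^sup>d f g\<close>, hence the sign of \<open>h'\<close> is that
  of \<open>G' F - G F'\<close>, i.e. of the difference between the \<open>f\<close>-weighted means of \<open>g\<close> over
  \<open>[x, d]\<close> and over \<open>[c, x]\<close>. If \<open>g\<close> is strictly increasing in \<open>x\<close>, the first mean exceeds
  \<open>g x\<close> and the second lies below it; the decreasing case is symmetric.\<close>

lemma continuous_on_left_section:
  assumes "continuous_on (S \<times> T) (\<lambda>(y, l). f y l)" "l \<in> T"
  shows "continuous_on S (\<lambda>y. f y l)"
proof -
  have "continuous_on S ((\<lambda>(y, l). f y l) \<circ> (\<lambda>y. (y, l)))"
    using assms(2) by (intro continuous_on_compose continuous_intros continuous_on_subset[OF assms(1)]) auto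
  then show ?thesis
    by (simp add: o_def)
qed

lemma has_real_derivative_integral_parameter:
  fixes f f' :: "real \<Rightarrow> real \<Rightarrow> real"
  assumes cont: "continuous_on ({u..v} \<times> {a..b}) (\<lambda>(y, l). f y l)"
    and cont': "continuous_on ({u..v} \<times> {a..b}) (\<lambda>(y, l). f' y l)"
    and deriv: "\<And>y l. y \<in> {u..v} \<Longrightarrow> l \<in> {a..b} \<Longrightarrow>
                  ((\<lambda>m. f y m) has_real_derivative f' y l) (at l within {a..b})"
    and l: "l \<in> {a..b}"
  shows "((\<lambda>m. integral {u..v} (\<lambda>y. f y m)) has_real_derivative integral {u..v} (\<lambda>y. f' y l))
           (at l within {a..b})"
proof -
  have "continuous_on ({a..b} \<times> {u..v}) (\<lambda>(l, y). f' y l)"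
  proof -
    have "continuous_on ({a..b} \<times> {u..v}) ((\<lambda>(y, l). f' y l) \<circ> prod.swap)"
      by (intro continuous_on_compose continuous_intros continuous_on_subset[OF cont']) auto
    then show ?thesis
      by (simp add: o_def split_beta)
  qed
  moreover have "(\<lambda>y. f y m) integrable_on {u..v}" if "m \<in> {a..b}" for m
    using continuous_on_left_section[OF cont that] integrable_continuous_interval by blast
  ultimately show ?thesis
    using leibniz_rule_field_derivative[of "{a..b}" u v "\<lambda>l y. f y l" "\<lambda>l y. f' y l" l] deriv l
    by simp
qed

lemma strict_mono_on_if_derivative_pos:
  fixes h h' :: "real \<Rightarrow> real"
  assumes deriv: "\<And>l. l \<in> {a..b} \<Longrightarrow> (h has_real_derivative h' l) (at l within {a..b})"
    and pos: "\<And>l. l \<in> {a..b} \<Longrightarrow> h' l > 0"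
  shows "strict_mono_on {a..b} h"
proof (rule strict_mono_onI)
  have cont: "continuous_on {a..b} h"
    using deriv by (rule DERIV_continuous_on)
  fix r s assume r: "r \<in> {a..b}" and s: "s \<in> {a..b}" and "r < s"
  show "h r < h s"
  proof (rule DERIV_pos_imp_increasing_open[OF \<open>r < s\<close>])
    show "continuous_on {r..s} h"
      by (rule continuous_on_subset[OF cont]) (use r s in auto)
    fix t assume "r < t" "t < s"
    then have t: "t \<in> {a<..<b}"
      using r s by auto
    then have "at t within {a..b} = at t"
      by (intro at_within_interior) auto
    then show "\<exists>y. DERIV h t :> y \<and> y > 0"
      using deriv[of t] pos[of t] t by auto
  qed
qed

lemma strict_mono_on_quotient:
  fixes F G F' G' :: "real \<Rightarrow> real"
  assumes F: "\<And>l. l \<in> {a..b} \<Longrightarrow> (F has_real_derivative F' l) (at l within {a..b})"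
    and G: "\<And>l. l \<in> {a..b} \<Longrightarrow> (G has_real_derivative G' l) (at l within {a..b})"
    and F_pos: "\<And>l. l \<in> {a..b} \<Longrightarrow> F l > 0"
    and cross: "\<And>l. l \<in> {a..b} \<Longrightarrow> G l * F' l < F l * G' l"
  shows "strict_mono_on {a..b} (\<lambda>l. G l / F l)"
proof (rule strict_mono_on_if_derivative_pos)
  fix l assume l: "l \<in> {a..b}"
  show "((\<lambda>l. G l / F l) has_real_derivative (G' l * F l - G l * F' l) / (F l * F l))
          (at l within {a..b})"
    using F_pos[OF l] by (intro DERIV_divide F G l) auto
  show "(G' l * F l - G l * F' l) / (F l * F l) > 0"
    using cross[OF l] F_pos[OF l] by (simp add: algebra_simps)
qed

lemma strict_antimono_on_quotient:
  fixes F G F' G' :: "real \<Rightarrow> real"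
  assumes "\<And>l. l \<in> {a..b} \<Longrightarrow> (F has_real_derivative F' l) (at l within {a..b})"
    and "\<And>l. l \<in> {a..b} \<Longrightarrow> (G has_real_derivative G' l) (at l within {a..b})"
    and "\<And>l. l \<in> {a..b} \<Longrightarrow> F l > 0"
    and "\<And>l. l \<in> {a..b} \<Longrightarrow> F l * G' l < G l * F' l"
  shows "strict_antimono_on {a..b} (\<lambda>l. G l / F l)"
proof -
  have "strict_mono_on {a..b} (\<lambda>l. - G l / F l)"
    using assms by (intro strict_mono_on_quotient[where G' = "\<lambda>l. - G' l"] DERIV_minus) auto
  then show ?thesis
    by (auto simp: monotone_on_def)
qed

lemma integral_pos_if_continuous_pos:
  fixes p :: "real \<Rightarrow> real"
  assumes "u < v" "continuous_on {u..v} p" "\<And>y. y \<in> {u..v} \<Longrightarrow> p y > 0"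
  shows "integral {u..v} p > 0"
  using integral_less_real[of u v "\<lambda>_. 0" p] assms by auto

lemma weighted_integral_cross_less:
  fixes p g :: "real \<Rightarrow> real"
  assumes x: "c < x" "x < d"
    and p: "continuous_on {c..d} p" and pg: "continuous_on {c..d} (\<lambda>y. p y * g y)"
    and p_pos: "\<And>y. y \<in> {c..d} \<Longrightarrow> p y > 0"
    and g: "strict_mono_on {c..d} g"
  shows "integral {x..d} p * integral {c..x} (\<lambda>y. p y * g y)
           < integral {c..x} p * integral {x..d} (\<lambda>y. p y * g y)"
proof -
  have cont_p: "continuous_on {u..v} p" and cont_pg: "continuous_on {u..v} (\<lambda>y. p y * g y)"
    if "c \<le> u" "v \<le> d" for u v
    using that by (auto intro: continuous_on_subset[OF p] continuous_on_subset[OF pg])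
  note cont = cont_p cont_pg continuous_on_mult_left[OF cont_p]
  have "integral {c..x} (\<lambda>y. p y * g y) < integral {c..x} (\<lambda>y. g x * p y)"
    using x p_pos g by (intro integral_less_real cont) (auto simp: monotone_on_def)
  then have left: "integral {c..x} (\<lambda>y. p y * g y) < g x * integral {c..x} p"
    by simp
  have "integral {x..d} (\<lambda>y. g x * p y) < integral {x..d} (\<lambda>y. p y * g y)"
    using x p_pos g by (intro integral_less_real cont) (auto simp: monotone_on_def)
  then have right: "g x * integral {x..d} p < integral {x..d} (\<lambda>y. p y * g y)"
    by simp
  have F_pos: "integral {c..x} p > 0" and G_pos: "integral {x..d} p > 0"
    using x p_pos by (intro integral_pos_if_continuous_pos cont; simp)+
  have "integral {x..d} p * integral {c..x} (\<lambda>y. p y * g y) < integral {x..d} p * (g x * integral {c..x} p)"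
    using left G_pos by (rule mult_strict_left_mono)
  also have "\<dots> = integral {c..x} p * (g x * integral {x..d} p)"
    by (simp add: algebra_simps)
  also have "\<dots> < integral {c..x} p * integral {x..d} (\<lambda>y. p y * g y)"
    using right F_pos by (rule mult_strict_left_mono)
  finally show ?thesis .
qed

lemma weighted_integral_cross_greater:
  fixes p g :: "real \<Rightarrow> real"
  assumes "c < x" "x < d"
    and "continuous_on {c..d} p" and "continuous_on {c..d} (\<lambda>y. p y * g y)"
    and "\<And>y. y \<in> {c..d} \<Longrightarrow> p y > 0"
    and "strict_antimono_on {c..d} g"
  shows "integral {c..x} p * integral {x..d} (\<lambda>y. p y * g y)
           < integral {x..d} p * integral {c..x} (\<lambda>y. p y * g y)"
proof -
  have "continuous_on {c..d} (\<lambda>y. p y * - g y)"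
    using continuous_on_minus[OF assms(4)] by simp
  then have "integral {x..d} p * integral {c..x} (\<lambda>y. p y * - g y)
               < integral {c..x} p * integral {x..d} (\<lambda>y. p y * - g y)"
    using assms by (intro weighted_integral_cross_less) (auto simp: monotone_on_def)
  then show ?thesis
    by simp
qed

locale positive_parametric_density =
  fixes c d a b :: real
    and f fl g :: "real \<Rightarrow> real \<Rightarrow> real"
  assumes fpos: "\<And>x l. x \<in> {c..d} \<Longrightarrow> l \<in> {a..b} \<Longrightarrow> f x l > 0"
    and fcont: "continuous_on ({c..d} \<times> {a..b}) (\<lambda>(x, l). f x l)"
    and fderiv: "\<And>x l. x \<in> {c..d} \<Longrightarrow> l \<in> {a..b} \<Longrightarrow>
                   ((\<lambda>m. f x m) has_real_derivative fl x l) (at l within {a..b})"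
    and flcont: "continuous_on ({c..d} \<times> {a..b}) (\<lambda>(x, l). fl x l)"
    and fg: "\<And>x l. x \<in> {c..d} \<Longrightarrow> l \<in> {a..b} \<Longrightarrow> fl x l = f x l * g x l"
begin

lemma continuous_on_section: "l \<in> {a..b} \<Longrightarrow> continuous_on {c..d} (\<lambda>y. f y l)"
  by (rule continuous_on_left_section[OF fcont])

lemma continuous_on_section_mult:
  assumes "l \<in> {a..b}"
  shows "continuous_on {c..d} (\<lambda>y. f y l * g y l)"
  using continuous_on_left_section[OF flcont assms] by (rule continuous_on_eq) (use fg assms in auto)

lemma integral_section_pos:
  assumes "c \<le> u" "u < v" "v \<le> d" "l \<in> {a..b}"
  shows "integral {u..v} (\<lambda>y. f y l) > 0"
  using assms by (intro integral_pos_if_continuous_pos continuous_on_subset[OF continuous_on_section] fpos) auto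

lemma integral_section_has_real_derivative:
  assumes uv: "c \<le> u" "v \<le> d" and l: "l \<in> {a..b}"
  shows "((\<lambda>m. integral {u..v} (\<lambda>y. f y m)) has_real_derivative integral {u..v} (\<lambda>y. f y l * g y l))
           (at l within {a..b})"
proof -
  have sub: "{u..v} \<times> {a..b} \<subseteq> {c..d} \<times> {a..b}"
    using uv by auto
  have "((\<lambda>m. integral {u..v} (\<lambda>y. f y m)) has_real_derivative integral {u..v} (\<lambda>y. fl y l))
          (at l within {a..b})"
    using uv l by (intro has_real_derivative_integral_parameter fderiv
        continuous_on_subset[OF fcont sub] continuous_on_subset[OF flcont sub]) auto
  moreover have "integral {u..v} (\<lambda>y. fl y l) = integral {u..v} (\<lambda>y. f y l * g y l)"
    using uv l by (intro integral_cong) (auto simp: fg)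
  ultimately show ?thesis
    by simp
qed

lemma integral_ratio_strict_mono_on:
  assumes g: "\<forall>l\<in>{a..b}. strict_mono_on {c..d} (\<lambda>x. g x l)" and x: "x \<in> {c<..<d}"
  shows "strict_mono_on {a..b} (\<lambda>l. integral {x..d} (\<lambda>y. f y l) / integral {c..x} (\<lambda>y. f y l))"
proof (rule strict_mono_on_quotient)
  fix l assume l: "l \<in> {a..b}"
  show "((\<lambda>l. integral {c..x} (\<lambda>y. f y l)) has_real_derivative integral {c..x} (\<lambda>y. f y l * g y l))
          (at l within {a..b})"
    "((\<lambda>l. integral {x..d} (\<lambda>y. f y l)) has_real_derivative integral {x..d} (\<lambda>y. f y l * g y l))
          (at l within {a..b})"
    using x l by (intro integral_section_has_real_derivative; simp)+
  show "integral {c..x} (\<lambda>y. f y l) > 0"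
    using x l by (intro integral_section_pos) auto
  show "integral {x..d} (\<lambda>y. f y l) * integral {c..x} (\<lambda>y. f y l * g y l)
          < integral {c..x} (\<lambda>y. f y l) * integral {x..d} (\<lambda>y. f y l * g y l)"
    using x l g by (intro weighted_integral_cross_less continuous_on_section continuous_on_section_mult fpos) auto
qed

lemma integral_ratio_strict_antimono_on:
  assumes g: "\<forall>l\<in>{a..b}. strict_antimono_on {c..d} (\<lambda>x. g x l)" and x: "x \<in> {c<..<d}"
  shows "strict_antimono_on {a..b} (\<lambda>l. integral {x..d} (\<lambda>y. f y l) / integral {c..x} (\<lambda>y. f y l))"
proof (rule strict_antimono_on_quotient)
  fix l assume l: "l \<in> {a..b}"
  show "((\<lambda>l. integral {c..x} (\<lambda>y. f y l)) has_real_derivative integral {c..x} (\<lambda>y. f y l * g y l))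
          (at l within {a..b})"
    "((\<lambda>l. integral {x..d} (\<lambda>y. f y l)) has_real_derivative integral {x..d} (\<lambda>y. f y l * g y l))
          (at l within {a..b})"
    using x l by (intro integral_section_has_real_derivative; simp)+
  show "integral {c..x} (\<lambda>y. f y l) > 0"
    using x l by (intro integral_section_pos) auto
  show "integral {c..x} (\<lambda>y. f y l) * integral {x..d} (\<lambda>y. f y l * g y l)
          < integral {x..d} (\<lambda>y. f y l) * integral {c..x} (\<lambda>y. f y l * g y l)"
    using x l g by (intro weighted_integral_cross_greater continuous_on_section continuous_on_section_mult fpos) auto
qed

end

theorem lemmaC1:
  fixes c d a b :: real
    and f fl g :: "real \<Rightarrow> real \<Rightarrow> real"
  assumes cd: "c < d"
    and ab: "a \<le> b"
    and fpos: "\<And>x l. x \<in> {c..d} \<Longrightarrow> l \<in> {a..b} \<Longrightarrow> f x l > 0"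
    and fcont: "continuous_on ({c..d} \<times> {a..b}) (\<lambda>(x, l). f x l)"
    and fderiv: "\<And>x l. x \<in> {c..d} \<Longrightarrow> l \<in> {a..b} \<Longrightarrow>
                   ((\<lambda>m. f x m) has_real_derivative fl x l) (at l within {a..b})"
    and flcont: "continuous_on ({c..d} \<times> {a..b}) (\<lambda>(x, l). fl x l)"
    and fg: "\<And>x l. x \<in> {c..d} \<Longrightarrow> l \<in> {a..b} \<Longrightarrow> fl x l = f x l * g x l"
  shows "((\<forall>l\<in>{a..b}. strict_mono_on {c..d} (\<lambda>x. g x l)) \<longrightarrow>
            (\<forall>x\<in>{c<..<d}. strict_mono_on {a..b}
               (\<lambda>l. integral {x..d} (\<lambda>y. f y l) / integral {c..x} (\<lambda>y. f y l))))
       \<and> ((\<forall>l\<in>{a..b}. strict_antimono_on {c..d} (\<lambda>x. g x l)) \<longrightarrow>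
            (\<forall>x\<in>{c<..<d}. strict_antimono_on {a..b}
               (\<lambda>l. integral {x..d} (\<lambda>y. f y l) / integral {c..x} (\<lambda>y. f y l))))"
proof -
  interpret positive_parametric_density c d a b f fl g
    using fpos fcont fderiv flcont fg by unfold_locales
  show ?thesis
    using integral_ratio_strict_mono_on integral_ratio_strict_antimono_on by blast
qed

end
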